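(* Let $0<a\le 1$ and let $z\in\mathbb{C}$ with $0<|z|\le 1$. For $\sigma>1$ and $t\in\mathbb{R}$ put $$f_{\sigma,a,z}(t):=\Gamma(\sigma+{\rm i}t)\,\Phi(\sigma+{\rm i}t,a,z),\qquad F_{\sigma,a,z}(t):=\frac{f_{\sigma,a,z}(t)}{f_{\sigma,a,z}(0)}.$$ Then $F_{\sigma,a,z}$ is the characteristic function of a probability measure on $\mathbb{R}$ for all $\sigma>1$ if and only if $z\in[-1,1]$ (and $z\neq 0$). Moreover, in that case the associated probability measure is absolutely continuous with density $$P_{\sigma,a,z}(y)=\frac{e^{y\sigma}\exp\bigl((1-a)e^{y}\bigr)}{f_{\sigma,a,z}(0)\,\bigl(\exp(e^{y})-z\bigr)},\qquad y\in\mathbb{R}.$$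
   Context: For $0<a\le1$, $s=\sigma+{\rm i}t\in\mathbb{C}$ with $\sigma>1$ and $z\in\mathbb{C}$ with $0<|z|\le 1$, the Hurwitz–Lerch zeta function is $\Phi(s,a,z):=\sum_{n=0}^\infty z^n (n+a)^{-s}$. The characteristic function of a probability measure $\mu$ on $\mathbb{R}$ is $\widehat\mu(t)=\int_{\mathbb{R}} e^{{\rm i}ty}\mu(dy)$. *)

theory Defs
  imports "HOL-Probability.Probability"
begin

definition hurwitz_lerch :: "complex \<Rightarrow> real \<Rightarrow> complex \<Rightarrow> complex" where
  "hurwitz_lerch s a z = (\<Sum>n. z ^ n / (complex_of_real (real n + a)) powr s)"

definition f_GP :: "real \<Rightarrow> real \<Rightarrow> complex \<Rightarrow> real \<Rightarrow> complex" where
  "f_GP \<sigma> a z t = Gamma (Complex \<sigma> t) * hurwitz_lerch (Complex \<sigma> t) a z"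

definition F_GP :: "real \<Rightarrow> real \<Rightarrow> complex \<Rightarrow> real \<Rightarrow> complex" where
  "F_GP \<sigma> a z t = f_GP \<sigma> a z t / f_GP \<sigma> a z 0"

text \<open>Density P(y); for real z all quantities are real, we take the real part.\<close>
definition P_GP :: "real \<Rightarrow> real \<Rightarrow> complex \<Rightarrow> real \<Rightarrow> real" where
  "P_GP \<sigma> a z y = Re (complex_of_real (exp (y * \<sigma>) * exp ((1 - a) * exp y))
      / (f_GP \<sigma> a z 0 * (complex_of_real (exp (exp y)) - z)))"

end

theory Submission
  imports Defs
begin

(* Expanding 1 / (exp (e^y) - z) as a geometric series in z exp (-e^y) and integrating termwise with
   Gamma(s) b^(-s) = integral of exp (s y) exp (-b e^y) dy shows that f(t) is the Fourier transform of
   the kernel exp (sigma y) exp ((1 - a) e^y) / (exp (e^y) - z).  For real z the kernel is positive, so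
   after normalisation it is the density P, and Levy's uniqueness theorem identifies every distribution
   with characteristic function F with it.  Conversely, if F is a characteristic function, the symmetry
   char (-t) = cnj (char t) shows that the imaginary part of kernel / f(0) has vanishing Fourier
   transform, hence vanishes almost everywhere; at two points y this makes (exp (e^y) - z) f(0) real,
   which forces z to be real. *)

lemma set_integrable_Gamma_integrand:
  fixes s :: complex
  assumes "0 < Re s"
  shows "set_integrable lborel {0<..} (\<lambda>x. of_real x powr (s - 1) / of_real (exp x))"
proof -
  have "(\<lambda>x. indicator {0<..} x *\<^sub>R (of_real x powr (s - 1) / of_real (exp x) :: complex))
          \<in> borel_measurable borel"
    by (intro borel_measurable_continuous_on_indicator) (auto intro!: continuous_intros)
  then show ?thesis
    using absolutely_integrable_Gamma_integral'[OF assms] unfolding set_integrable_def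
    by (subst (asm) integrable_completion) auto
qed

lemma has_bochner_integral_Gamma_exp:
  fixes s :: complex
  assumes s: "0 < Re s"
  shows "has_bochner_integral lborel (\<lambda>y. exp (s * of_real y) * of_real (exp (- exp y))) (Gamma s)"
proof -
  define F where "F = (\<lambda>y::real. exp (s * of_real y) * of_real (exp (- exp y)))"
  define G where "G = (\<lambda>x::real. of_real x powr (s - 1) / of_real (exp x))"
  have G_int: "set_integrable lborel (einterval 0 \<infinity>) G"
    using set_integrable_Gamma_integrand[OF s] by (simp add: G_def zero_ereal_def)
  have substitution: "(1 / x) *\<^sub>R F (ln x) = G x" if "0 < x" for x
    using that by (simp add: F_def G_def powr_def Ln_of_real exp_diff exp_of_real
                             scaleR_conv_of_real field_simps flip: of_real_mult exp_add)
  have ln_ereal_at_0: "((ereal \<circ> ln \<circ> real_of_ereal) \<longlongrightarrow> - \<infinity>) (at_right 0)"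
    using ln_at_0 by (simp add: zero_ereal_def ereal_tendsto_simps)
  have ln_ereal_at_top: "((ereal \<circ> ln \<circ> real_of_ereal) \<longlongrightarrow> \<infinity>) (at_left \<infinity>)"
    using ln_at_top by (simp add: ereal_tendsto_simps)
  have "set_integrable lborel (einterval (-\<infinity>) \<infinity>) (\<lambda>y. norm (F y))"
  proof (rule interval_integral_substitution_nonneg(1)[OF _ _ _ _ _ _ ln_ereal_at_0 ln_ereal_at_top])
    show "set_integrable lborel (einterval 0 \<infinity>) (\<lambda>x. norm (F (ln x)) * (1 / x))"
      using set_integrable_norm[OF G_int]
      by (rule set_integrable_cong[THEN iffD1, rotated -1])
         (auto simp: einterval_iff zero_ereal_def simp flip: substitution)
  qed (auto simp: zero_ereal_def F_def intro!: derivative_eq_intros continuous_intros)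
  moreover have "F \<in> borel_measurable lborel"
    unfolding F_def by measurable
  ultimately have F_int: "integrable lborel F"
    by (simp add: set_integrable_def integrable_norm_iff)
  have "(LBINT y=-\<infinity>..\<infinity>. F y) = (LBINT x=0..\<infinity>. (1 / x) *\<^sub>R F (ln x))"
  proof (rule interval_integral_substitution_integrable[OF _ _ _ _ _ ln_ereal_at_0 ln_ereal_at_top])
    show "set_integrable lborel (einterval 0 \<infinity>) (\<lambda>x. (1 / x) *\<^sub>R F (ln x))"
      using G_int by (rule set_integrable_cong[THEN iffD1, rotated -1])
         (auto simp: einterval_iff zero_ereal_def substitution)
  qed (use F_int in \<open>auto simp: zero_ereal_def F_def set_integrable_def
                    intro!: derivative_eq_intros continuous_intros\<close>)
  also have "\<dots> = (LBINT x=0..\<infinity>. G x)"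
    by (rule interval_integral_cong) (auto simp: zero_ereal_def einterval_iff substitution)
  also have "\<dots> = Gamma s"
    using set_borel_integral_eq_integral(2)[OF set_integrable_Gamma_integrand[OF s]]
          Gamma_integral_complex'[OF s]
    by (simp add: interval_lebesgue_integral_def zero_ereal_def G_def integral_unique)
  finally show ?thesis
    using F_int
    by (simp add: has_bochner_integral_iff F_def interval_lebesgue_integral_def
                  set_lebesgue_integral_def)
qed

lemma has_bochner_integral_Gamma_exp_scaled:
  fixes s :: complex and b :: real
  assumes s: "0 < Re s" and b: "0 < b"
  shows "has_bochner_integral lborel (\<lambda>y. exp (s * of_real y) * of_real (exp (- b * exp y)))
           (Gamma s / of_real b powr s)"
proof -
  define F where "F = (\<lambda>y::real. exp (s * of_real y) * of_real (exp (- exp y)))"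
  have F: "has_bochner_integral lborel F (Gamma s)"
    unfolding F_def by (rule has_bochner_integral_Gamma_exp[OF s])
  have shift: "F (ln b + y) = of_real b powr s * (exp (s * of_real y) * of_real (exp (- b * exp y)))"
    for y
    using b by (simp add: F_def powr_def Ln_of_real exp_add distrib_left mult_ac)
  have "has_bochner_integral lborel (\<lambda>y. F (ln b + 1 * y)) (Gamma s)"
    using F lborel_integrable_real_affine[of F 1 "ln b"] lborel_integral_real_affine[of 1 F "ln b"]
    by (simp add: has_bochner_integral_iff)
  then have "has_bochner_integral lborel (\<lambda>y. F (ln b + y) / of_real b powr s) (Gamma s / of_real b powr s)"
    by auto
  then show ?thesis
    using b by (simp add: shift)
qed

lemma has_bochner_integral_Gamma_exp_real:
  fixes \<sigma> b :: real
  assumes "0 < \<sigma>" and "0 < b"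
  shows "has_bochner_integral lborel (\<lambda>y. exp (\<sigma> * y) * exp (- b * exp y)) (Gamma \<sigma> / b powr \<sigma>)"
  using has_bochner_integral_Re[OF has_bochner_integral_Gamma_exp_scaled[of "of_real \<sigma>" b]] assms
  by (simp add: Gamma_complex_of_real powr_of_real exp_of_real flip: of_real_mult)

lemma norm_of_real_powr:
  fixes s :: complex
  assumes "0 \<le> x"
  shows "norm (of_real x powr s) = x powr Re s"
  using assms norm_powr_real_powr[of "of_real x" s] by simp

lemma summable_norm_hurwitz_lerch:
  fixes s z :: complex and a :: real
  assumes s: "1 < Re s" and a: "0 < a" and z: "cmod z \<le> 1"
  shows "summable (\<lambda>n. norm (z ^ n / of_real (real n + a) powr s))"
proof (rule summable_comparison_test_ev)
  show "summable (\<lambda>n. real n powr (- Re s))"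
    using s by (simp add: summable_real_powr_iff)
  show "\<forall>\<^sub>F n in sequentially. norm (norm (z ^ n / of_real (real n + a) powr s)) \<le> real n powr (- Re s)"
    using eventually_gt_at_top[of 0]
  proof eventually_elim
    case (elim n)
    have "norm (z ^ n / of_real (real n + a) powr s) = cmod z ^ n * (real n + a) powr (- Re s)"
      using a by (simp add: norm_mult norm_inverse norm_power norm_of_real_powr powr_minus
                            divide_inverse del: of_real_add)
    also have "\<dots> \<le> (real n + a) powr (- Re s)"
      using z by (simp add: mult_left_le_one_le power_le_one)
    also have "\<dots> \<le> real n powr (- Re s)"
      using elim a s by (intro powr_mono2') auto
    finally show ?case by simp
  qed
qed

(* For s = sigma + i t this is exp (i t y) times the unnormalised density of P_GP. *)
definition lerch_kernel :: "complex \<Rightarrow> real \<Rightarrow> complex \<Rightarrow> real \<Rightarrow> complex" where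
  "lerch_kernel s a z y =
     exp (s * of_real y) * of_real (exp ((1 - a) * exp y)) / (of_real (exp (exp y)) - z)"

lemma lerch_kernel_series:
  fixes z :: complex and a y :: real
  assumes z: "cmod z \<le> 1"
  shows "summable (\<lambda>n. norm (z ^ n * (exp (s * of_real y) * of_real (exp (- (real n + a) * exp y)))))"
    and "(\<lambda>n. z ^ n * (exp (s * of_real y) * of_real (exp (- (real n + a) * exp y))))
           sums lerch_kernel s a z y"
proof -
  define c where "c = exp (s * of_real y) * of_real (exp (- a * exp y))"
  define q where "q = z * of_real (exp (- exp y))"
  have geometric_term:
    "z ^ n * (exp (s * of_real y) * of_real (exp (- (real n + a) * exp y))) = c * q ^ n" for n
  proof -
    have "exp (- (real n + a) * exp y) = exp (- a * exp y) * exp (- exp y) ^ n"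
      by (simp add: exp_of_nat_mult[symmetric] exp_add[symmetric] algebra_simps)
    then show ?thesis
      by (simp add: c_def q_def power_mult_distrib mult_ac)
  qed
  have "norm q \<le> exp (- exp y)"
    using z by (simp add: q_def norm_mult mult_left_le_one_le)
  also have "\<dots> < 1"
    by simp
  finally have "norm q < 1" .
  show "summable (\<lambda>n. norm (z ^ n * (exp (s * of_real y) * of_real (exp (- (real n + a) * exp y)))))"
    unfolding geometric_term using \<open>norm q < 1\<close> by (simp add: norm_mult norm_power summable_geometric)
  define E where "E = complex_of_real (exp (exp y))"
  have "E \<noteq> z"
    using z by (auto simp: E_def dest: arg_cong[of _ _ norm])
  moreover have "1 - q = (E - z) / E"
    and "of_real (exp ((1 - a) * exp y)) = of_real (exp (- a * exp y)) * E"
    by (simp_all add: q_def E_def field_simps exp_minus flip: of_real_mult exp_add)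
  ultimately have "c * (1 / (1 - q)) = lerch_kernel s a z y"
    by (simp add: lerch_kernel_def c_def E_def)
  then show "(\<lambda>n. z ^ n * (exp (s * of_real y) * of_real (exp (- (real n + a) * exp y))))
               sums lerch_kernel s a z y"
    unfolding geometric_term using \<open>norm q < 1\<close> by (metis sums_mult geometric_sums)
qed

lemma has_bochner_integral_lerch_kernel:
  fixes s z :: complex and a :: real
  assumes s: "1 < Re s" and a: "0 < a" and z: "cmod z \<le> 1"
  shows "has_bochner_integral lborel (lerch_kernel s a z) (Gamma s * hurwitz_lerch s a z)"
proof -
  define T where
    "T n y = z ^ n * (exp (s * of_real y) * of_real (exp (- (real n + a) * exp y)))" for n and y :: real
  have n_a: "0 < real n + a" for n
    using a by simp
  have T: "has_bochner_integral lborel (T n) (Gamma s * (z ^ n / of_real (real n + a) powr s))" for n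
  proof -
    have "has_bochner_integral lborel (T n) (z ^ n * (Gamma s / of_real (real n + a) powr s))"
      unfolding T_def using s n_a
      by (intro has_bochner_integral_mult_right has_bochner_integral_Gamma_exp_scaled) auto
    then show ?thesis
      by (simp add: mult_ac)
  qed
  have "has_bochner_integral lborel (\<lambda>y. cmod z ^ n * (exp (Re s * y) * exp (- (real n + a) * exp y)))
          (cmod z ^ n * (Gamma (Re s) / (real n + a) powr Re s))" for n
    using s by (intro has_bochner_integral_mult_right has_bochner_integral_Gamma_exp_real n_a) auto
  then have T_norm: "has_bochner_integral lborel (\<lambda>y. norm (T n y))
                       (Gamma (Re s) * norm (z ^ n / of_real (real n + a) powr s))" for n
    using n_a[of n]
    by (simp add: T_def norm_mult norm_power norm_exp_eq_Re norm_divide norm_of_real_powr mult_ac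
             del: of_real_add)
  have summable_T_norm: "summable (\<lambda>n. integral\<^sup>L lborel (\<lambda>y. norm (T n y)))"
    unfolding has_bochner_integral_integral_eq[OF T_norm]
    using summable_norm_hurwitz_lerch[OF s a z] by (rule summable_mult)
  have T_sums: "(\<lambda>n. T n y) sums lerch_kernel s a z y" and T_abs: "summable (\<lambda>n. norm (T n y))" for y
    unfolding T_def using lerch_kernel_series[OF z] by blast+
  have kernel: "lerch_kernel s a z = (\<lambda>y. \<Sum>n. T n y)"
    using T_sums by (simp add: fun_eq_iff sums_unique)
  have T_int: "integrable lborel (T n)" for n
    using T by (rule integrable.intros)
  have "has_bochner_integral lborel (lerch_kernel s a z) (\<Sum>n. integral\<^sup>L lborel (T n))"
    unfolding kernel has_bochner_integral_iff
    using integrable_suminf[OF T_int AE_I2[OF T_abs] summable_T_norm]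
          integral_suminf[OF T_int AE_I2[OF T_abs] summable_T_norm] by simp
  also have "(\<Sum>n. integral\<^sup>L lborel (T n)) = Gamma s * hurwitz_lerch s a z"
    using suminf_mult[OF summable_norm_cancel[OF summable_norm_hurwitz_lerch[OF s a z]], of "Gamma s"]
    by (simp add: has_bochner_integral_integral_eq[OF T] hurwitz_lerch_def del: of_real_add)
  finally show ?thesis .
qed

lemma has_bochner_integral_f_GP:
  assumes "1 < \<sigma>" and "0 < a" and "cmod z \<le> 1"
  shows "has_bochner_integral lborel (\<lambda>y. lerch_kernel \<sigma> a z y * iexp (t * y)) (f_GP \<sigma> a z t)"
proof -
  have "exp (Complex \<sigma> t * of_real y) = of_real (exp (\<sigma> * y)) * iexp (t * y)" for y
    by (simp add: Complex_eq algebra_simps exp_add exp_of_real flip: of_real_mult)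
  then have "lerch_kernel \<sigma> a z y * iexp (t * y) = lerch_kernel (Complex \<sigma> t) a z y" for y
    by (simp add: lerch_kernel_def exp_of_real flip: of_real_mult)
  then show ?thesis
    using has_bochner_integral_lerch_kernel[of "Complex \<sigma> t" a z] assms by (simp add: f_GP_def)
qed

lemma ae_lborel_real_nontrivial: "ae_filter (lborel :: real measure) \<noteq> bot"
  by (simp add: ae_filter_eq_bot_iff)

lemma integral_pos_lborel:
  fixes p :: "real \<Rightarrow> real"
  assumes "integrable lborel p" and "\<And>y. 0 < p y"
  shows "0 < integral\<^sup>L lborel p"
proof -
  have "integral\<^sup>L lborel p \<noteq> 0"
  proof
    assume "integral\<^sup>L lborel p = 0"
    then have "AE y in lborel. p y = 0"
      using assms by (subst (asm) integral_nonneg_eq_0_iff_AE) (auto intro: less_imp_le)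
    then obtain y where "p y = 0"
      using eventually_happens'[OF ae_lborel_real_nontrivial] by blast
    then show False
      using assms(2)[of y] by simp
  qed
  moreover have "0 \<le> integral\<^sup>L lborel p"
    using assms by (intro integral_nonneg_AE) (auto intro: less_imp_le)
  ultimately show ?thesis
    by simp
qed

lemma real_distribution_density_lborel:
  fixes p :: "real \<Rightarrow> real"
  assumes "integrable lborel p" and "\<And>y. 0 \<le> p y" and "integral\<^sup>L lborel p = 1"
  shows "real_distribution (density lborel (\<lambda>y. ennreal (p y)))"
proof -
  have "emeasure (density lborel (\<lambda>y. ennreal (p y))) UNIV = ennreal (integral\<^sup>L lborel p)"
    using assms by (simp add: emeasure_density nn_integral_eq_integral)
  then have "prob_space (density lborel (\<lambda>y. ennreal (p y)))"
    using assms(3) by (intro prob_spaceI) simp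
  then show ?thesis
    by (intro real_distribution.intro real_distribution_axioms.intro) auto
qed

lemma char_density_lborel:
  fixes p :: "real \<Rightarrow> real"
  assumes "p \<in> borel_measurable lborel" and "\<And>y. 0 \<le> p y"
  shows "char (density lborel (\<lambda>y. ennreal (p y))) t = (CLINT y|lborel. of_real (p y) * iexp (t * y))"
  unfolding char_def using assms by (subst integral_density) (auto simp: scaleR_conv_of_real)

lemma integrable_Fourier_integrand:
  fixes p :: "real \<Rightarrow> real"
  assumes "integrable lborel p"
  shows "integrable lborel (\<lambda>y. of_real (p y) * iexp (t * y))"
proof (rule Bochner_Integration.integrable_bound)
  have [measurable]: "p \<in> borel_measurable lborel"
    using assms by (rule borel_measurable_integrable)
  show "(\<lambda>y. of_real (p y) * iexp (t * y)) \<in> borel_measurable lborel"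
    by measurable
qed (use assms in \<open>auto simp: norm_mult\<close>)

lemma AE_eq_if_Fourier_eq:
  fixes p q :: "real \<Rightarrow> real"
  assumes p: "integrable lborel p" "\<And>y. 0 \<le> p y" and q: "integrable lborel q" "\<And>y. 0 \<le> q y"
    and Fourier_eq: "\<And>t. (CLINT y|lborel. of_real (p y) * iexp (t * y))
                          = (CLINT y|lborel. of_real (q y) * iexp (t * y))"
  shows "AE y in lborel. p y = q y"
proof -
  have [measurable]: "p \<in> borel_measurable lborel" "q \<in> borel_measurable lborel"
    using p q by (auto intro: borel_measurable_integrable)
  define m where "m = integral\<^sup>L lborel p"
  have "of_real (integral\<^sup>L lborel p) = (of_real (integral\<^sup>L lborel q) :: complex)"
    using Fourier_eq[of 0] by simp
  then have m_q: "m = integral\<^sup>L lborel q"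
    by (simp add: m_def)
  show ?thesis
  proof (cases "m = 0")
    case True
    then have "AE y in lborel. p y = 0" "AE y in lborel. q y = 0"
      using p q m_q by (simp_all add: m_def flip: integral_nonneg_eq_0_iff_AE)
    then show ?thesis
      by eventually_elim simp
  next
    case False
    then have "0 < m"
      using p by (simp add: m_def order_less_le integral_nonneg)
    have distr: "real_distribution (density lborel (\<lambda>y. ennreal (p y / m)))"
                "real_distribution (density lborel (\<lambda>y. ennreal (q y / m)))"
      using p q m_q \<open>0 < m\<close> by (auto simp: m_def intro!: real_distribution_density_lborel)
    have "char (density lborel (\<lambda>y. ennreal (p y / m))) = char (density lborel (\<lambda>y. ennreal (q y / m)))"
      using p q \<open>0 < m\<close> Fourier_eq
      by (simp add: fun_eq_iff char_density_lborel)
    then have "density lborel (\<lambda>y. ennreal (p y / m)) = density lborel (\<lambda>y. ennreal (q y / m))"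
      using distr by (intro Levy_uniqueness)
    then have "AE y in lborel. ennreal (p y / m) = ennreal (q y / m)"
      by (subst (asm) sigma_finite_measure.density_unique_iff[OF sigma_finite_lborel]) auto
    then show ?thesis
    proof eventually_elim
      case (elim y)
      then show ?case
        using p(2)[of y] q(2)[of y] \<open>0 < m\<close> by (simp add: ennreal_inj field_simps)
    qed
  qed
qed

lemma AE_zero_if_Fourier_zero:
  fixes v :: "real \<Rightarrow> real"
  assumes v: "integrable lborel v"
    and Fourier_zero: "\<And>t. (CLINT y|lborel. of_real (v y) * iexp (t * y)) = 0"
  shows "AE y in lborel. v y = 0"
proof -
  define v_pos where "v_pos y = max (v y) 0" for y
  define v_neg where "v_neg y = max (- v y) 0" for y
  have v_split: "v y = v_pos y - v_neg y" for y
    by (simp add: v_pos_def v_neg_def max_def)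
  have int: "integrable lborel v_pos" "integrable lborel v_neg"
    using v by (auto simp: v_pos_def[abs_def] v_neg_def[abs_def])
  have Fourier_eq: "(CLINT y|lborel. of_real (v_pos y) * iexp (t * y))
                      = (CLINT y|lborel. of_real (v_neg y) * iexp (t * y))" for t
  proof -
    have "(CLINT y|lborel. of_real (v y) * iexp (t * y))
                 = (CLINT y|lborel. of_real (v_pos y) * iexp (t * y) - of_real (v_neg y) * iexp (t * y))"
      by (simp add: v_split left_diff_distrib)
    also have "\<dots> = (CLINT y|lborel. of_real (v_pos y) * iexp (t * y))
                      - (CLINT y|lborel. of_real (v_neg y) * iexp (t * y))"
      using int by (intro Bochner_Integration.integral_diff integrable_Fourier_integrand)
    finally show ?thesis
      using Fourier_zero[of t] by simp
  qed
  have "AE y in lborel. v_pos y = v_neg y"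
    by (rule AE_eq_if_Fourier_eq[OF int(1) _ int(2) _ Fourier_eq]) (auto simp: v_pos_def v_neg_def)
  then show ?thesis
    by eventually_elim (simp add: v_split)
qed

lemma (in real_distribution) char_uminus: "char M (- t) = cnj (char M t)"
proof -
  have "char M (- t) = expectation (\<lambda>x. cnj (iexp (t * x)))"
    by (simp add: char_def exp_cnj)
  also have "\<dots> = cnj (char M t)"
    unfolding char_def by simp
  finally show ?thesis .
qed

lemma Reals_if_Reals_mult:
  fixes c w :: "'a :: real_field"
  assumes "c \<in> \<real>" and "c \<noteq> 0" and "c * w \<in> \<real>"
  shows "w \<in> \<real>"
proof -
  have "(c * w) / c \<in> \<real>"
    using assms(3,1) by (rule Reals_divide)
  then show ?thesis
    using assms(2) by simp
qed

lemma Reals_if_two_real_multiples: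
  fixes z w :: complex and E\<^sub>1 E\<^sub>2 :: real
  assumes "E\<^sub>1 \<noteq> E\<^sub>2" and "w \<noteq> 0"
    and "(of_real E\<^sub>1 - z) * w \<in> \<real>" and "(of_real E\<^sub>2 - z) * w \<in> \<real>"
  shows "z \<in> \<real>"
proof -
  have "of_real (E\<^sub>1 - E\<^sub>2) * w = (of_real E\<^sub>1 - z) * w - (of_real E\<^sub>2 - z) * w"
    by (simp add: algebra_simps)
  also have "\<dots> \<in> \<real>"
    using assms(3,4) by (rule Reals_diff)
  finally have "of_real (E\<^sub>1 - E\<^sub>2) * w \<in> \<real>" .
  then have "w \<in> \<real>"
    by (rule Reals_if_Reals_mult[OF Reals_of_real, rotated]) (use assms(1) in simp)
  have "w * z = of_real E\<^sub>1 * w - (of_real E\<^sub>1 - z) * w"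
    by (simp add: algebra_simps)
  also have "\<dots> \<in> \<real>"
    by (rule Reals_diff[OF Reals_mult[OF Reals_of_real \<open>w \<in> \<real>\<close>] assms(3)])
  finally show ?thesis
    by (rule Reals_if_Reals_mult[OF \<open>w \<in> \<real>\<close> assms(2)])
qed

lemma P_GP_eq_Re_lerch_kernel: "P_GP \<sigma> a z y = Re (lerch_kernel \<sigma> a z y / f_GP \<sigma> a z 0)"
  by (simp add: P_GP_def lerch_kernel_def exp_of_real divide_divide_eq_left mult.commute
           flip: of_real_mult)

lemma F_GP_char_density:
  assumes \<sigma>: "1 < \<sigma>" and a: "0 < a" and z: "z \<in> \<real>" "cmod z \<le> 1"
  shows "0 < P_GP \<sigma> a z y"
    and "real_distribution (density lborel (\<lambda>y. ennreal (P_GP \<sigma> a z y)))"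
    and "char (density lborel (\<lambda>y. ennreal (P_GP \<sigma> a z y))) = F_GP \<sigma> a z"
proof -
  obtain r where r: "z = of_real r"
    using z(1) by (rule Reals_cases)
  define k where "k y = exp (\<sigma> * y) * exp ((1 - a) * exp y) / (exp (exp y) - r)" for y
  have k_pos: "0 < k y" for y
  proof -
    have "r \<le> 1"
      using z(2) r by simp
    moreover have "1 < exp (exp y)"
      by simp
    ultimately have "0 < exp (exp y) - r"
      by linarith
    then show ?thesis
      unfolding k_def by (intro divide_pos_pos mult_pos_pos) auto
  qed
  have kernel: "lerch_kernel \<sigma> a z y = of_real (k y)" for y
    by (simp add: lerch_kernel_def k_def r exp_of_real flip: of_real_mult)
  have "has_bochner_integral lborel (\<lambda>y. of_real (k y)) (f_GP \<sigma> a z 0)"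
    using has_bochner_integral_f_GP[OF \<sigma> a z(2), of 0] by (simp add: kernel)
  then have k_int: "integrable lborel k" and f0: "f_GP \<sigma> a z 0 = of_real (integral\<^sup>L lborel k)"
    by (simp_all add: has_bochner_integral_iff complex_of_real_integrable_eq)
  define I where "I = integral\<^sup>L lborel k"
  have "0 < I"
    unfolding I_def using k_int k_pos by (rule integral_pos_lborel)
  have P: "P_GP \<sigma> a z y = k y / I" for y
    by (simp add: P_GP_eq_Re_lerch_kernel kernel f0 I_def flip: of_real_divide)
  show "0 < P_GP \<sigma> a z y"
    using k_pos \<open>0 < I\<close> by (simp add: P)
  show "real_distribution (density lborel (\<lambda>y. ennreal (P_GP \<sigma> a z y)))"
    using k_int k_pos \<open>0 < I\<close>
    by (intro real_distribution_density_lborel) (auto simp: P I_def less_imp_le)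
  show "char (density lborel (\<lambda>y. ennreal (P_GP \<sigma> a z y))) = F_GP \<sigma> a z"
  proof
    fix t
    have "(\<lambda>y. of_real (P_GP \<sigma> a z y) * iexp (t * y))
            = (\<lambda>y. lerch_kernel \<sigma> a z y * iexp (t * y) / f_GP \<sigma> a z 0)"
      by (simp add: fun_eq_iff P kernel f0 I_def)
    have [measurable]: "k \<in> borel_measurable lborel"
      using k_int by (rule borel_measurable_integrable)
    have "P_GP \<sigma> a z \<in> borel_measurable lborel"
      unfolding P[abs_def] by measurable
    then have "char (density lborel (\<lambda>y. ennreal (P_GP \<sigma> a z y))) t
                 = (CLINT y|lborel. of_real (P_GP \<sigma> a z y) * iexp (t * y))"
      using k_pos \<open>0 < I\<close> by (intro char_density_lborel) (auto simp: P less_imp_le)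
    also have "\<dots> = (CLINT y|lborel. lerch_kernel \<sigma> a z y * iexp (t * y)) / f_GP \<sigma> a z 0"
      unfolding \<open>(\<lambda>y. of_real (P_GP \<sigma> a z y) * iexp (t * y)) = _\<close> by simp
    also have "\<dots> = F_GP \<sigma> a z t"
      using has_bochner_integral_f_GP[OF \<sigma> a z(2), of t]
      by (simp add: has_bochner_integral_iff F_GP_def)
    finally show "char (density lborel (\<lambda>y. ennreal (P_GP \<sigma> a z y))) t = F_GP \<sigma> a z t" .
  qed
qed

lemma Reals_if_F_GP_char:
  assumes \<sigma>: "1 < \<sigma>" and a: "0 < a" and z: "cmod z \<le> 1"
    and \<mu>: "real_distribution \<mu>" "char \<mu> = F_GP \<sigma> a z"
  shows "z \<in> \<real>"
proof -
  define f\<^sub>0 where "f\<^sub>0 = f_GP \<sigma> a z 0"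
  have "f\<^sub>0 \<noteq> 0"
    using real_distribution.char_zero[OF \<mu>(1)] \<mu>(2) by (auto simp: F_GP_def f\<^sub>0_def)
  define g where "g y = lerch_kernel \<sigma> a z y / f\<^sub>0" for y
  have g: "has_bochner_integral lborel (\<lambda>y. g y * iexp (t * y)) (char \<mu> t)" for t
    using has_bochner_integral_divide_zero[OF has_bochner_integral_f_GP[OF \<sigma> a z, of t], of f\<^sub>0]
          \<mu>(2)
    by (simp add: g_def F_GP_def f\<^sub>0_def)
  have cnj_g: "has_bochner_integral lborel (\<lambda>y. cnj (g y) * iexp (t * y)) (char \<mu> t)" for t
    using has_bochner_integral_cnj[OF g[of "- t"]]
    by (simp add: real_distribution.char_uminus[OF \<mu>(1)] exp_cnj)
  have "has_bochner_integral lborel (\<lambda>y. of_real (Im (g y)) * iexp (t * y)) 0" for t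
  proof -
    have Im_eq: "(w * v - cnj w * v) / (2 * \<i>) = of_real (Im w) * v" for w v :: complex
      unfolding left_diff_distrib[symmetric] complex_diff_cnj by (simp add: algebra_simps)
    from has_bochner_integral_divide_zero[OF has_bochner_integral_diff[OF g[of t] cnj_g[of t]],
                                          where c = "2 * \<i>"]
    show ?thesis
      by (simp only: Im_eq diff_self div_0)
  qed
  moreover have "integrable lborel (\<lambda>y. Im (g y))"
    using g[of 0] by (intro integrable_Im) (simp add: has_bochner_integral_iff)
  ultimately have Im_g: "AE y in lborel. Im (g y) = 0"
    by (intro AE_zero_if_Fourier_zero) (auto simp: has_bochner_integral_iff)
  have real_multiple: "(of_real (exp (exp y)) - z) * f\<^sub>0 \<in> \<real>" if "Im (g y) = 0" for y
  proof -
    have "1 < exp (exp y)"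
      by simp
    then have "of_real (exp (exp y)) \<noteq> z"
      using z by auto
    then have product: "g y * ((of_real (exp (exp y)) - z) * f\<^sub>0)
                          = of_real (exp (\<sigma> * y) * exp ((1 - a) * exp y))"
      and "g y \<noteq> 0"
      using \<open>f\<^sub>0 \<noteq> 0\<close> by (simp_all add: g_def lerch_kernel_def exp_of_real flip: of_real_mult)
    have "g y \<in> \<real>"
      using that by (simp add: complex_is_Real_iff)
    then show ?thesis
      by (rule Reals_if_Reals_mult[OF _ \<open>g y \<noteq> 0\<close>]) (unfold product, rule Reals_of_real)
  qed
  obtain y\<^sub>1 where y\<^sub>1: "Im (g y\<^sub>1) = 0"
    using eventually_happens'[OF ae_lborel_real_nontrivial Im_g] by blast
  have "AE y in lborel. Im (g y) = 0 \<and> y \<noteq> y\<^sub>1"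
    using Im_g AE_lborel_singleton[of y\<^sub>1] by eventually_elim simp
  then obtain y\<^sub>2 where y\<^sub>2: "Im (g y\<^sub>2) = 0" "y\<^sub>2 \<noteq> y\<^sub>1"
    using eventually_happens'[OF ae_lborel_real_nontrivial] by blast
  show ?thesis
    using y\<^sub>2(2)
    by (intro Reals_if_two_real_multiples[OF _ \<open>f\<^sub>0 \<noteq> 0\<close> real_multiple[OF y\<^sub>1]
                                           real_multiple[OF y\<^sub>2(1)]]) simp
qed

theorem proposition2p1:
  fixes a :: real and z :: complex
  assumes "0 < a" and "a \<le> 1" and "0 < cmod z" and "cmod z \<le> 1"
  shows "((\<forall>\<sigma>>1. \<exists>\<mu>. real_distribution \<mu> \<and> char \<mu> = F_GP \<sigma> a z)
            \<longleftrightarrow> z \<in> \<real>)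
       \<and> (z \<in> \<real> \<longrightarrow> (\<forall>\<sigma>>1.
            (\<forall>y. 0 \<le> P_GP \<sigma> a z y)
          \<and> real_distribution (density lborel (\<lambda>y. ennreal (P_GP \<sigma> a z y)))
          \<and> char (density lborel (\<lambda>y. ennreal (P_GP \<sigma> a z y))) = F_GP \<sigma> a z
          \<and> (\<forall>\<mu>. real_distribution \<mu> \<and> char \<mu> = F_GP \<sigma> a z
                 \<longrightarrow> \<mu> = density lborel (\<lambda>y. ennreal (P_GP \<sigma> a z y)))))"
proof -
  note real_case = F_GP_char_density[OF _ assms(1) _ assms(4)]
  have unique: "\<mu> = density lborel (\<lambda>y. ennreal (P_GP \<sigma> a z y))"
    if "z \<in> \<real>" "1 < \<sigma>" "real_distribution \<mu>" "char \<mu> = F_GP \<sigma> a z" for \<sigma> \<mu>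
    using that real_case[of \<sigma>] by (intro Levy_uniqueness) auto
  have "(\<forall>\<sigma>>1. \<exists>\<mu>. real_distribution \<mu> \<and> char \<mu> = F_GP \<sigma> a z) \<longleftrightarrow> z \<in> \<real>"
  proof
    assume "\<forall>\<sigma>>1. \<exists>\<mu>. real_distribution \<mu> \<and> char \<mu> = F_GP \<sigma> a z"
    then obtain \<mu> where "real_distribution \<mu>" "char \<mu> = F_GP 2 a z"
      by force
    then show "z \<in> \<real>"
      using Reals_if_F_GP_char[of 2 a z] assms(1,4) by simp
  next
    assume "z \<in> \<real>"
    then show "\<forall>\<sigma>>1. \<exists>\<mu>. real_distribution \<mu> \<and> char \<mu> = F_GP \<sigma> a z"
      using real_case(2,3) by blast
  qed
  then show ?thesis
    using real_case unique by (auto intro: less_imp_le)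
qed

end
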